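(* Let $r$ and $n$ be positive integers, let $p\in\mathbb C$ with $\operatorname{Re}(r(p+1))>1$, and let $t\in\mathbb C$ with $|t|\le1$. Then $$M_r(t;n):=\sum_{k\ge1}\frac{M_r(t;n,k)}{k^{rp}}=\frac{\mathrm{Li}_{rp+r}(t)}{\zeta(rp+r)}\,\sigma_{-p}(n,r).$$
   Context: For positive integers $a,b,r$, $(a,b)_r$ denotes the largest $r$-th power dividing both $a$ and $b$. The $r$-Ramanujan sum is $c_r(n,k):=\sum_{1\le m\le k^r,\ (m,k^r)_r=1}e^{2\pi i mn/k^r}$, and $M_r(t;n,k):=\frac{1}{k^r}\sum_{d\mid k}c_r(n,k/d)\,t^d$. $\mathrm{Li}_s(t):=\sum_{k\ge1}t^k/k^s$ is the polylogarithm, $\zeta$ the Riemann zeta function, and $\sigma_p(n,r):=\sum_{d\ge1,\ d^r\mid n}d^{rp}$. *)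

theory Defs
  imports "HOL-Analysis.Analysis"
begin

definition gcd_pow :: "nat \<Rightarrow> nat \<Rightarrow> nat \<Rightarrow> nat" where
  "gcd_pow r a b = (GREATEST e. (\<exists>d. e = d ^ r) \<and> e dvd a \<and> e dvd b)"

definition ramanujan_r :: "nat \<Rightarrow> nat \<Rightarrow> nat \<Rightarrow> complex" where
  "ramanujan_r r n k =
     (\<Sum>m\<in>{m. 1 \<le> m \<and> m \<le> k ^ r \<and> gcd_pow r m (k ^ r) = 1}.
        exp (2 * of_real pi * \<i> * of_nat m * of_nat n / of_nat (k ^ r)))"

definition M_r :: "nat \<Rightarrow> complex \<Rightarrow> nat \<Rightarrow> nat \<Rightarrow> complex" where
  "M_r r t n k = (1 / of_nat (k ^ r)) * (\<Sum>d\<in>{d. d dvd k}. ramanujan_r r n (k div d) * t ^ d)"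

definition polylog :: "complex \<Rightarrow> complex \<Rightarrow> complex" where
  "polylog s t = (\<Sum>k. t ^ Suc k / of_nat (Suc k) powr s)"

text \<open>Riemann zeta function via its Dirichlet series (used only for Re s > 1).\<close>
definition zeta_fun :: "complex \<Rightarrow> complex" where
  "zeta_fun s = (\<Sum>k. 1 / of_nat (Suc k) powr s)"

definition sigma_r :: "complex \<Rightarrow> nat \<Rightarrow> nat \<Rightarrow> complex" where
  "sigma_r p n r = (\<Sum>d\<in>{d. 1 \<le> d \<and> d ^ r dvd n}. of_nat d powr (of_nat r * p))"

end

theory Submission
  imports Defs "HOL-Computational_Algebra.Squarefree"
begin

text \<open>
  Put \<open>s = r(p + 1)\<close>, so that \<open>Re s > 1\<close>. Moebius inversion of the condition
  \<open>(m, k\<^sup>r)\<^sub>r = 1\<close>, followed by orthogonality of the \<open>k\<^sup>r\<close>-th roots of unity, gives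
  \<open>c\<^sub>r(n, k) = \<Sum>\<^bsub>d | k\<^esub> \<mu>(d) \<eta>(k/d)\<close> with \<open>\<eta>(j) = j\<^sup>r\<close> if \<open>j\<^sup>r | n\<close> and \<open>0\<close> otherwise.
  Hence \<open>\<Sum> c\<^sub>r(n,k)/k\<^sup>s = (\<Sum> \<mu>(d)/d\<^sup>s)(\<Sum> \<eta>(j)/j\<^sup>s) = \<sigma>\<^sub>-\<^sub>p(n,r)/\<zeta>(s)\<close>. Since
  \<open>M\<^sub>r(t;n,k)/k\<^bsup>rp\<^esup> = (\<Sum>\<^bsub>d | k\<^esub> t\<^sup>d c\<^sub>r(n,k/d))/k\<^sup>s\<close>, the series in question is the
  Dirichlet product of \<open>Li\<^sub>s(t)\<close> with that series. All series involved converge absolutely,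
  which justifies the rearrangements.
\<close>

section \<open>Dirichlet convolution of absolutely convergent Dirichlet series\<close>

lemma of_nat_mult_powr:
  "(of_nat (a * b) :: complex) powr s = of_nat a powr s * of_nat b powr s"
  unfolding of_nat_mult by (rule powr_times_real) auto

lemma norm_of_nat_powr:
  "0 < a \<Longrightarrow> norm ((of_nat a :: complex) powr s) = real a powr Re s"
  by (subst norm_powr_real_powr) auto

lemma has_sum_product_complex:
  fixes f :: "'a \<Rightarrow> complex" and g :: "'b \<Rightarrow> complex"
  assumes f: "(f has_sum a) A" and g: "(g has_sum b) B"
  shows "((\<lambda>(x, y). f x * g y) has_sum a * b) (A \<times> B)"
proof (rule has_sum_SigmaI)
  show "((\<lambda>y. case (x, y) of (x, y) \<Rightarrow> f x * g y) has_sum f x * b) B" for x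
    using has_sum_cmult_right[OF g] by simp
  show "((\<lambda>x. f x * b) has_sum a * b) A"
    using has_sum_cmult_left[OF f] by simp
  have abs: "(\<lambda>x. norm (f x)) summable_on A" "(\<lambda>y. norm (g y)) summable_on B"
    using f g by (auto simp: summable_on_iff_abs_summable_on_complex[symmetric] summable_on_def)
  have "(\<lambda>z. norm ((\<lambda>(x, y). f x * g y) z)) summable_on A \<times> B"
    unfolding Infinite_Sum.abs_summable_on_Sigma_iff
    using summable_on_cmult_right[OF abs(2)] summable_on_cmult_left[OF abs(1)]
    by (simp add: norm_mult infsum_cmult_right' infsum_nonneg abs_mult)
  then show "(\<lambda>(x, y). f x * g y) summable_on A \<times> B"
    by (simp add: summable_on_iff_abs_summable_on_complex)
qed

text \<open>
  Dirichlet series are sums over \<open>{1..}\<close> in the unordered sense of \<^const>\<open>has_sum\<close>; for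
  complex values this is absolute convergence, which permits the rearrangement in
  the proof of the Dirichlet product formula.
\<close>

definition dirichlet_conv :: "(nat \<Rightarrow> 'a :: semiring_0) \<Rightarrow> (nat \<Rightarrow> 'a) \<Rightarrow> nat \<Rightarrow> 'a" where
  "dirichlet_conv f g k = (\<Sum>d | d dvd k. f d * g (k div d))"

lemma bij_betw_divisor_pairs:
  "bij_betw (\<lambda>(k, d). (d, k div d)) (SIGMA k:{1::nat..}. {d. d dvd k}) ({1..} \<times> {1..})"
  by (rule bij_betw_byWitness[where f' = "\<lambda>(a, b). (a * b, a)"])
     (auto elim!: dvdE simp: one_le_mult_iff Suc_le_eq)

lemma has_sum_dirichlet_conv:
  fixes f g :: "nat \<Rightarrow> complex"
  assumes "(f has_sum a) {1..}" and "(g has_sum b) {1..}"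
  shows "(dirichlet_conv f g has_sum a * b) {1..}"
proof -
  have "((\<lambda>(x, y). f x * g y) has_sum a * b) ({1..} \<times> {1..})"
    using assms by (rule has_sum_product_complex)
  then have "(((\<lambda>(x, y). f x * g y) \<circ> (\<lambda>(k, d). (d, k div d))) has_sum a * b)
               (SIGMA k:{1..}. {d. d dvd k})"
    by (simp only: comp_def has_sum_reindex_bij_betw[OF bij_betw_divisor_pairs])
  then have "((\<lambda>(k, d). f d * g (k div d)) has_sum a * b) (SIGMA k:{1..}. {d. d dvd k})"
    by (simp add: comp_def case_prod_unfold)
  then show ?thesis
    unfolding dirichlet_conv_def
    by (rule has_sum_Sigma') (auto intro: has_sum_finite finite_divisors_nat)
qed

lemma dirichlet_conv_divide_powr:
  fixes f g :: "nat \<Rightarrow> complex"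
  shows "dirichlet_conv (\<lambda>d. f d / of_nat d powr s) (\<lambda>d. g d / of_nat d powr s) k
           = dirichlet_conv f g k / of_nat k powr s"
  unfolding dirichlet_conv_def sum_divide_distrib
proof (intro sum.cong refl)
  fix d assume "d \<in> {d. d dvd k}"
  then have "(of_nat k :: complex) powr s = of_nat d powr s * of_nat (k div d) powr s"
    by (metis dvd_mult_div_cancel mem_Collect_eq of_nat_mult_powr)
  then show "f d / of_nat d powr s * (g (k div d) / of_nat (k div d) powr s)
               = f d * g (k div d) / of_nat k powr s"
    by simp
qed

lemma has_sum_atLeast_1_imp_sums:
  fixes f :: "nat \<Rightarrow> 'a :: {topological_comm_monoid_add, t2_space}"
  assumes "(f has_sum S) {1..}"
  shows "(\<lambda>k. f (Suc k)) sums S"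
proof -
  have "bij_betw Suc UNIV {1..}"
    by (rule bij_betw_byWitness[where f' = "\<lambda>k. k - 1"]) (auto simp: image_iff intro!: exI[of _ "_ - 1"])
  then have "((\<lambda>k. f (Suc k)) has_sum S) UNIV"
    using has_sum_reindex_bij_betw assms by blast
  then show ?thesis by (rule has_sum_imp_sums)
qed

lemma sums_imp_has_sum_atLeast_1:
  fixes f :: "nat \<Rightarrow> 'a :: {topological_comm_monoid_add, t2_space}"
  assumes "f summable_on {1..}" and "(\<lambda>k. f (Suc k)) sums S"
  shows "(f has_sum S) {1..}"
  using has_sum_infsum[OF assms(1)] assms(2)
  by (metis has_sum_atLeast_1_imp_sums sums_unique2)

lemma summable_on_dirichlet_series_bounded:
  fixes a :: "nat \<Rightarrow> complex"
  assumes "1 < Re s" and "\<And>j. norm (a j) \<le> C"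
  shows "(\<lambda>j. a j / of_nat j powr s) summable_on {1..}"
proof -
  have C: "0 \<le> C" using norm_ge_zero order_trans assms(2) by blast
  have "summable (\<lambda>j. C * real j powr (- Re s))"
    using assms(1) by (intro summable_mult) (simp add: summable_real_powr_iff)
  then have "(\<lambda>j. C * real j powr (- Re s)) summable_on {1..}"
    using C by (intro summable_on_subset_banach[OF summable_nonneg_imp_summable_on]) auto
  moreover have "norm (a j / of_nat j powr s) \<le> C * real j powr (- Re s)" if "j \<in> {1..}" for j
    using that assms(2) C
    by (simp add: norm_divide norm_of_nat_powr powr_minus_divide divide_right_mono)
  ultimately have "(\<lambda>j. norm (a j / of_nat j powr s)) summable_on {1..}"
    by (rule Infinite_Sum.abs_summable_on_comparison_test')
  then show ?thesis
    by (simp add: summable_on_iff_abs_summable_on_complex)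
qed

lemma has_sum_polylog:
  assumes "1 < Re s" and "norm t \<le> 1"
  shows "((\<lambda>j. t ^ j / of_nat j powr s) has_sum polylog s t) {1..}"
proof (rule sums_imp_has_sum_atLeast_1)
  show summable: "(\<lambda>j. t ^ j / of_nat j powr s) summable_on {1..}"
    using assms by (intro summable_on_dirichlet_series_bounded[of s _ 1])
                   (auto simp: norm_power power_le_one)
  show "(\<lambda>k. t ^ Suc k / of_nat (Suc k) powr s) sums polylog s t"
    unfolding polylog_def
    using has_sum_atLeast_1_imp_sums[OF has_sum_infsum[OF summable]]
    by (intro summable_sums) (rule sums_summable)
qed

lemma has_sum_zeta_fun:
  assumes "1 < Re s"
  shows "((\<lambda>j. 1 / of_nat j powr s) has_sum zeta_fun s) {1..}"
proof (rule sums_imp_has_sum_atLeast_1)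
  show summable: "(\<lambda>j. 1 / of_nat j powr s) summable_on {1..}"
    using assms by (intro summable_on_dirichlet_series_bounded[of s _ 1]) auto
  show "(\<lambda>k. 1 / of_nat (Suc k) powr s) sums zeta_fun s"
    unfolding zeta_fun_def
    using has_sum_atLeast_1_imp_sums[OF has_sum_infsum[OF summable]]
    by (intro summable_sums) (rule sums_summable)
qed

section \<open>The Moebius function\<close>

definition moebius_mu :: "nat \<Rightarrow> complex" where
  "moebius_mu n = (if squarefree n then (-1) ^ card (prime_factors n) else 0)"

lemma norm_moebius_mu_le: "norm (moebius_mu n) \<le> 1"
  by (simp add: moebius_mu_def norm_power)

lemma squarefree_prod_primes:
  assumes "\<And>p. p \<in> S \<Longrightarrow> prime (p :: nat)"
  shows "squarefree (\<Prod>S)"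
  using assms by (intro squarefree_prod_coprime) (auto intro: primes_coprime squarefree_prime)

lemma prime_factors_prod_primes:
  assumes "finite S" and "\<And>p. p \<in> S \<Longrightarrow> prime (p :: nat)"
  shows "prime_factors (\<Prod>S) = S"
proof -
  have "prime_factors (\<Prod>S) = (\<Union>p\<in>S. prime_factors p)"
    using assms by (subst prime_factors_prod) (auto dest: prime_gt_0_nat)
  also have "\<dots> = S"
    using assms by (auto simp: prime_factorization_prime)
  finally show ?thesis .
qed

lemma prod_prime_factors_squarefree:
  assumes "squarefree (n :: nat)"
  shows "\<Prod>(prime_factors n) = n"
proof -
  have "n \<noteq> 0" using assms by (metis not_squarefree_0)
  then have "n = (\<Prod>p\<in>prime_factors n. p ^ multiplicity p n)"
    by (simp add: prime_factorization_nat)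
  also have "\<dots> = \<Prod>(prime_factors n)"
    using assms \<open>n \<noteq> 0\<close> by (intro prod.cong) (auto simp: squarefree_factorial_semiring')
  finally show ?thesis by simp
qed

lemma prod_prime_factors_subset_dvd:
  assumes "S \<subseteq> prime_factors (n :: nat)"
  shows "\<Prod>S dvd n"
proof -
  have "mset_set S \<subseteq># prime_factorization n"
    using subset_imp_msubset_mset_set[OF assms finite_set_mset] mset_set_set_mset_msubset
    by (rule subset_mset.trans)
  then have "prod_mset (mset_set S) dvd prod_mset (prime_factorization n)"
    by (rule prod_mset_subset_imp_dvd)
  then show ?thesis
    by (cases "n = 0") (simp_all add: prod_unfold_prod_mset)
qed

lemma sum_minus_one_power_card_Pow:
  assumes "finite A" and "A \<noteq> {}"
  shows "(\<Sum>X\<in>Pow A. (-1 :: complex) ^ card X) = 0"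
proof -
  have "(\<Sum>X\<in>Pow A. (-1 :: complex) ^ card X) = 0 ^ card A"
    using prod_diff_conv_sum[OF assms(1), of "\<lambda>_. 1" "\<lambda>_. 1"] by (simp add: eq_commute)
  also have "\<dots> = 0"
    using assms by (simp add: card_gt_0_iff)
  finally show ?thesis .
qed

lemma bij_betw_squarefree_divisors_Pow_prime_factors:
  assumes "n > 0"
  shows "bij_betw prime_factors {d. d dvd n \<and> squarefree d} (Pow (prime_factors (n :: nat)))"
proof (rule bij_betw_byWitness[where f' = Prod])
  show "\<forall>S\<in>Pow (prime_factors n). prime_factors (\<Prod>S) = S"
    by (auto intro!: prime_factors_prod_primes intro: finite_subset)
  show "\<forall>d\<in>{d. d dvd n \<and> squarefree d}. \<Prod>(prime_factors d) = d"
    by (auto simp: prod_prime_factors_squarefree)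
  show "Prod ` Pow (prime_factors n) \<subseteq> {d. d dvd n \<and> squarefree d}"
    by (auto intro!: prod_prime_factors_subset_dvd squarefree_prod_primes)
  show "prime_factors ` {d. d dvd n \<and> squarefree d} \<subseteq> Pow (prime_factors n)"
    using assms by (auto intro: dvd_prime_factors[THEN subsetD])
qed

lemma sum_moebius_mu_divisors:
  assumes "n > 0"
  shows "(\<Sum>d | d dvd n. moebius_mu d) = (if n = 1 then 1 else 0)"
proof -
  have "(\<Sum>d | d dvd n. moebius_mu d) = (\<Sum>d | d dvd n \<and> squarefree d. (-1) ^ card (prime_factors d))"
    using assms by (intro sum.mono_neutral_cong_right) (auto simp: moebius_mu_def finite_divisors_nat)
  also have "\<dots> = (\<Sum>S\<in>Pow (prime_factors n). (-1) ^ card S)"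
    by (rule sum.reindex_bij_betw[OF bij_betw_squarefree_divisors_Pow_prime_factors[OF assms]])
  also have "\<dots> = (if n = 1 then 1 else 0)"
    using assms sum_minus_one_power_card_Pow[of "prime_factors n"]
    by (auto simp: prime_factorization_empty_iff)
  finally show ?thesis .
qed

lemma has_sum_moebius_mu_dirichlet_series:
  assumes "1 < Re s"
  shows "((\<lambda>j. moebius_mu j / of_nat j powr s) has_sum 1 / zeta_fun s) {1..}"
proof -
  define U where "U = (\<Sum>\<^sub>\<infinity>j\<in>{1..}. moebius_mu j / of_nat j powr s)"
  have U: "((\<lambda>j. moebius_mu j / of_nat j powr s) has_sum U) {1..}"
    unfolding U_def
    by (rule has_sum_infsum, rule summable_on_dirichlet_series_bounded[OF assms norm_moebius_mu_le])
  have conv: "(dirichlet_conv (\<lambda>j. moebius_mu j / of_nat j powr s) (\<lambda>j. 1 / of_nat j powr s)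
                has_sum U * zeta_fun s) {1..}"
    using U has_sum_zeta_fun[OF assms] by (rule has_sum_dirichlet_conv)
  have unit: "dirichlet_conv (\<lambda>j. moebius_mu j / of_nat j powr s) (\<lambda>j. 1 / of_nat j powr s) k
                = (if k = 1 then 1 else 0)" if "k \<in> {1..}" for k
    using that dirichlet_conv_divide_powr[of moebius_mu s "\<lambda>_. 1" k]
    by (simp add: dirichlet_conv_def sum_moebius_mu_divisors)
  have "((\<lambda>k :: nat. if k = 1 then 1 else 0) has_sum (1 :: complex)) {1}"
    using has_sum_finite[of "{1 :: nat}" "\<lambda>k. if k = 1 then 1 else 0 :: complex"] by simp
  then have "((\<lambda>k :: nat. if k = 1 then 1 else 0) has_sum (1 :: complex)) {1..}"
    by (rule has_sum_cong_neutral[THEN iffD1, rotated -1]) auto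
  moreover have "((\<lambda>k :: nat. if k = 1 then 1 else 0) has_sum U * zeta_fun s) {1..}"
    by (rule has_sum_cong[THEN iffD1, OF _ conv]) (rule unit)
  ultimately have "U * zeta_fun s = 1"
    by (rule has_sum_unique[symmetric])
  then have "U = 1 / zeta_fun s"
    by (metis mult_zero_right nonzero_eq_divide_eq zero_neq_one)
  then show ?thesis
    using U by simp
qed

section \<open>The \<open>r\<close>-Ramanujan sum\<close>

lemma lcm_power_nat: "lcm (a :: nat) b ^ r = lcm (a ^ r) (b ^ r)"
proof (cases "a = 0 \<or> b = 0 \<or> r = 0")
  case True
  then show ?thesis by (cases r) auto
next
  case False
  then have "gcd a b ^ r \<noteq> 0" by simp
  moreover have "gcd a b ^ r * lcm a b ^ r = gcd a b ^ r * lcm (a ^ r) (b ^ r)"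
    by (metis gcd_exp power_mult_distrib prod_gcd_lcm_nat)
  ultimately show ?thesis
    using mult_left_cancel by blast
qed

text \<open>
  \<open>gcd_root r k m\<close> is the \<open>g\<close> with \<open>(m, k\<^sup>r)\<^sub>r = g\<^sup>r\<close>. It is defined as a maximum, and the
  divisors of \<open>k\<close> whose \<open>r\<close>-th power divides \<open>m\<close> are closed under \<^const>\<open>lcm\<close>,
  so it is also the greatest of them with respect to divisibility.
\<close>

definition gcd_root :: "nat \<Rightarrow> nat \<Rightarrow> nat \<Rightarrow> nat" where
  "gcd_root r k m = Max {d. d dvd k \<and> d ^ r dvd m}"

lemma dvd_gcd_root_iff:
  assumes "k > 0"
  shows "d dvd gcd_root r k m \<longleftrightarrow> d dvd k \<and> d ^ r dvd m"
proof -
  define D where "D = {d. d dvd k \<and> d ^ r dvd m}"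
  define g where "g = gcd_root r k m"
  have fin: "finite D"
    using assms unfolding D_def by (intro finite_subset[OF _ finite_divisors_nat[of k]]) auto
  have "1 \<in> D" by (simp add: D_def)
  then have g: "g \<in> D"
    using fin unfolding g_def gcd_root_def D_def[symmetric] by (intro Max_in) auto
  then have "g > 0"
    using assms by (auto simp: D_def intro!: Nat.gr0I)
  have "d dvd g" if "d \<in> D" for d
  proof -
    have "d > 0"
      using that assms by (auto simp: D_def intro!: Nat.gr0I)
    have "lcm d g \<in> D"
      using that g by (auto simp: D_def lcm_power_nat intro: lcm_least)
    then have "lcm d g \<le> g"
      unfolding g_def gcd_root_def D_def[symmetric] by (rule Max_ge[OF fin])
    moreover have "g \<le> lcm d g"
      using \<open>d > 0\<close> \<open>g > 0\<close> by (intro dvd_imp_le) (auto simp: lcm_pos_nat)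
    ultimately have "lcm d g = g" by simp
    then show ?thesis by (metis dvd_lcm1)
  qed
  moreover have "d \<in> D" if "d dvd g"
    using that g by (auto simp: D_def intro: dvd_trans dvd_power_same)
  ultimately show ?thesis
    unfolding g_def[symmetric] D_def by blast
qed

lemma gcd_root_pos: "k > 0 \<Longrightarrow> gcd_root r k m > 0"
  by (metis dvd_gcd_root_iff dvd_pos_nat dvd_refl)

lemma gcd_pow_eq_gcd_root_power:
  assumes "r > 0" and "k > 0"
  shows "gcd_pow r m (k ^ r) = gcd_root r k m ^ r"
  unfolding gcd_pow_def
proof (rule Greatest_equality)
  show "(\<exists>d. gcd_root r k m ^ r = d ^ r) \<and> gcd_root r k m ^ r dvd m \<and> gcd_root r k m ^ r dvd k ^ r"
    using dvd_gcd_root_iff[OF assms(2), of "gcd_root r k m" r m] by (auto intro: dvd_power_same)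
next
  fix e assume "(\<exists>d. e = d ^ r) \<and> e dvd m \<and> e dvd k ^ r"
  then obtain d where d: "e = d ^ r" "d ^ r dvd m" "d ^ r dvd k ^ r" by auto
  then have "d dvd gcd_root r k m"
    using assms by (simp add: dvd_gcd_root_iff)
  then have "d \<le> gcd_root r k m"
    using gcd_root_pos[OF assms(2)] by (rule dvd_imp_le)
  then show "e \<le> gcd_root r k m ^ r"
    using d(1) by (simp add: power_mono)
qed

lemma sum_moebius_mu_gcd_pow:
  assumes "r > 0" and "k > 0"
  shows "(\<Sum>d | d dvd k \<and> d ^ r dvd m. moebius_mu d) = (if gcd_pow r m (k ^ r) = 1 then 1 else 0)"
proof -
  have "(\<Sum>d | d dvd k \<and> d ^ r dvd m. moebius_mu d) = (\<Sum>d | d dvd gcd_root r k m. moebius_mu d)"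
    using assms(2) by (simp add: dvd_gcd_root_iff)
  also have "\<dots> = (if gcd_root r k m = 1 then 1 else 0)"
    using gcd_root_pos[OF assms(2)] by (rule sum_moebius_mu_divisors)
  also have "gcd_root r k m = 1 \<longleftrightarrow> gcd_pow r m (k ^ r) = 1"
    using assms by (simp add: gcd_pow_eq_gcd_root_power power_eq_1_iff)
  finally show ?thesis .
qed

lemma sum_roots_of_unity:
  assumes "N > 0"
  shows "(\<Sum>j=1..N. exp (2 * of_real pi * \<i> * of_nat j * of_nat n / of_nat N))
           = (if N dvd n then of_nat N else (0 :: complex))"
proof -
  define z where "z = exp (2 * of_real pi * \<i> * of_nat n / of_nat N)"
  have power_z: "exp (2 * of_real pi * \<i> * of_nat j * of_nat n / of_nat N) = z ^ j" for j
    unfolding z_def exp_of_nat_mult[symmetric] by (simp add: mult_ac)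
  have "z ^ N = exp (of_nat n * (2 * of_real pi * \<i>))"
    using assms unfolding z_def exp_of_nat_mult[symmetric] by (simp add: mult_ac)
  then have "z ^ N = 1"
    by (simp only: exp_of_nat_mult exp_two_pi_i) simp
  have "z = 1 \<longleftrightarrow> N dvd n"
  proof
    assume "z = 1"
    then obtain m :: int where "2 * pi * real n / real N = 2 * real_of_int m * pi"
      unfolding z_def exp_eq_1 by auto
    then have "int n = m * int N"
      using assms by (simp add: field_simps) (metis of_int_eq_iff of_int_mult of_int_of_nat_eq)
    then show "N dvd n"
      by (metis dvd_triv_right int_dvd_int_iff)
  next
    assume "N dvd n"
    then obtain q where "n = N * q" ..
    then have "z = exp (of_nat q * (2 * of_real pi * \<i>))"
      unfolding z_def using assms by (simp add: field_simps)
    then show "z = 1"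
      by (simp only: exp_of_nat_mult exp_two_pi_i) simp
  qed
  moreover have "(\<Sum>j=1..N. z ^ j) = 0" if "z \<noteq> 1"
  proof -
    have "(\<Sum>j=1..N. z ^ j) = (\<Sum>j<N. z ^ Suc j)"
      by (rule sum.reindex_bij_witness[where i = Suc and j = "\<lambda>j. j - 1"]) auto
    also have "\<dots> = z * (\<Sum>j<N. z ^ j)"
      by (simp add: sum_distrib_left)
    also have "\<dots> = z * ((z ^ N - 1) / (z - 1))"
      using that by (simp add: geometric_sum)
    finally show ?thesis
      using \<open>z ^ N = 1\<close> by simp
  qed
  ultimately show ?thesis
    by (cases "N dvd n") (simp_all add: power_z)
qed

lemma sum_roots_of_unity_multiples:
  assumes "a > 0" and "b > 0"
  shows "(\<Sum>m=1..a * b. if a dvd m then exp (2 * of_real pi * \<i> * of_nat m * of_nat n / of_nat (a * b)) else 0)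
           = (if b dvd n then of_nat b else (0 :: complex))"
proof -
  have "{m \<in> {1..a * b}. a dvd m} = (\<lambda>j. a * j) ` {1..b}"
    using assms by (auto elim!: dvdE simp: image_iff)
  then have "(\<Sum>m=1..a * b. if a dvd m then exp (2 * of_real pi * \<i> * of_nat m * of_nat n / of_nat (a * b)) else 0)
               = (\<Sum>j=1..b. exp (2 * of_real pi * \<i> * of_nat (a * j) * of_nat n / of_nat (a * b)))"
    using assms by (simp add: sum.inter_filter[symmetric] sum.reindex inj_on_def)
  also have "\<dots> = (\<Sum>j=1..b. exp (2 * of_real pi * \<i> * of_nat j * of_nat n / of_nat b))"
    using assms by (intro sum.cong refl) (simp add: field_simps)
  also have "\<dots> = (if b dvd n then of_nat b else 0)"
    using assms(2) by (rule sum_roots_of_unity)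
  finally show ?thesis .
qed

definition power_divisor_weight :: "nat \<Rightarrow> nat \<Rightarrow> nat \<Rightarrow> complex" where
  "power_divisor_weight r n j = (if j ^ r dvd n then of_nat (j ^ r) else 0)"

lemma ramanujan_r_eq_dirichlet_conv:
  assumes "r > 0" and "k > 0"
  shows "ramanujan_r r n k = dirichlet_conv moebius_mu (power_divisor_weight r n) k"
proof -
  define w where "w m = exp (2 * of_real pi * \<i> * of_nat m * of_nat n / of_nat (k ^ r))" for m
  have fin: "finite {d. d dvd k}"
    using assms(2) by (simp add: finite_divisors_nat)
  have "ramanujan_r r n k = (\<Sum>m=1..k^r. (if gcd_pow r m (k ^ r) = 1 then 1 else 0) * w m)"
    unfolding ramanujan_r_def w_def by (rule sum.mono_neutral_cong_left) auto
  also have "\<dots> = (\<Sum>m=1..k^r. \<Sum>d | d dvd k. if d ^ r dvd m then moebius_mu d * w m else 0)"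
  proof (intro sum.cong refl)
    fix m
    have "(if gcd_pow r m (k ^ r) = 1 then 1 else 0) = (\<Sum>d | d dvd k \<and> d ^ r dvd m. moebius_mu d)"
      by (simp only: sum_moebius_mu_gcd_pow[OF assms])
    also have "\<dots> = (\<Sum>d | d dvd k. if d ^ r dvd m then moebius_mu d else 0)"
      using fin by (subst sum.inter_filter[symmetric]) (simp_all add: conj_commute)
    finally show "(if gcd_pow r m (k ^ r) = 1 then 1 else 0) * w m
                    = (\<Sum>d | d dvd k. if d ^ r dvd m then moebius_mu d * w m else 0)"
      by (simp add: sum_distrib_right if_distrib[of "\<lambda>x. x * w m"] cong: if_cong)
  qed
  also have "\<dots> = (\<Sum>d | d dvd k. moebius_mu d * (\<Sum>m=1..k^r. if d ^ r dvd m then w m else 0))"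
    by (subst sum.swap) (simp add: sum_distrib_left if_distrib[of "\<lambda>x. moebius_mu _ * x"] cong: if_cong)
  also have "\<dots> = dirichlet_conv moebius_mu (power_divisor_weight r n) k"
    unfolding dirichlet_conv_def
  proof (intro sum.cong refl)
    fix d assume "d \<in> {d. d dvd k}"
    then have k_eq: "k ^ r = d ^ r * (k div d) ^ r" and pos: "d ^ r > 0" "(k div d) ^ r > 0"
      using assms(2) by (auto simp: power_mult_distrib[symmetric] elim!: dvdE)
    have "(\<Sum>m=1..k^r. if d ^ r dvd m then w m else 0) = power_divisor_weight r n (k div d)"
      using pos unfolding w_def power_divisor_weight_def k_eq by (rule sum_roots_of_unity_multiples)
    then show "moebius_mu d * (\<Sum>m=1..k^r. if d ^ r dvd m then w m else 0)
                 = moebius_mu d * power_divisor_weight r n (k div d)"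
      by simp
  qed
  finally show ?thesis .
qed

lemma has_sum_power_divisor_weight:
  assumes "r > 0" and "n > 0"
  shows "((\<lambda>j. power_divisor_weight r n j / of_nat j powr (of_nat r * p + of_nat r))
           has_sum sigma_r (- p) n r) {1..}"
proof -
  define S where "S = {d :: nat. 1 \<le> d \<and> d ^ r dvd n}"
  have "S \<subseteq> {1..n}"
    using assms by (auto simp: S_def intro!: le_trans[OF self_le_power dvd_imp_le])
  then have "finite S"
    by (rule finite_subset) simp
  have "((\<lambda>d. of_nat d powr (of_nat r * - p)) has_sum sigma_r (- p) n r) S"
    unfolding sigma_r_def S_def[symmetric] using \<open>finite S\<close> by (rule has_sum_finite)
  moreover have "power_divisor_weight r n d / of_nat d powr (of_nat r * p + of_nat r)
                   = of_nat d powr (of_nat r * - p)" if "d \<in> S" for d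
    using that by (simp add: S_def power_divisor_weight_def powr_add powr_nat' powr_minus_divide)
  ultimately have "((\<lambda>j. power_divisor_weight r n j / of_nat j powr (of_nat r * p + of_nat r))
                     has_sum sigma_r (- p) n r) S"
    by (simp cong: has_sum_cong)
  then show ?thesis
    by (rule has_sum_cong_neutral[THEN iffD1, rotated -1])
       (auto simp: S_def power_divisor_weight_def)
qed

lemma has_sum_ramanujan_r_dirichlet_series:
  assumes "r > 0" and "n > 0" and "1 < Re (of_nat r * p + of_nat r)"
  shows "((\<lambda>k. ramanujan_r r n k / of_nat k powr (of_nat r * p + of_nat r))
           has_sum sigma_r (- p) n r / zeta_fun (of_nat r * p + of_nat r)) {1..}"
proof -
  define s where "s = of_nat r * p + of_nat r"
  have conv: "(dirichlet_conv (\<lambda>d. moebius_mu d / of_nat d powr s)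
                 (\<lambda>j. power_divisor_weight r n j / of_nat j powr s)
                 has_sum 1 / zeta_fun s * sigma_r (- p) n r) {1..}"
    using has_sum_moebius_mu_dirichlet_series has_sum_power_divisor_weight assms
    unfolding s_def by (intro has_sum_dirichlet_conv) auto
  have eq: "dirichlet_conv (\<lambda>d. moebius_mu d / of_nat d powr s)
               (\<lambda>j. power_divisor_weight r n j / of_nat j powr s) k
             = ramanujan_r r n k / of_nat k powr s" if "k \<in> {1..}" for k
    using that assms(1) by (simp add: dirichlet_conv_divide_powr ramanujan_r_eq_dirichlet_conv)
  have "((\<lambda>k. ramanujan_r r n k / of_nat k powr s) has_sum 1 / zeta_fun s * sigma_r (- p) n r) {1..}"
    by (rule has_sum_cong[THEN iffD1, OF _ conv]) (rule eq)
  then show ?thesis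
    unfolding s_def by simp
qed

lemma M_r_divide_powr:
  assumes "k > 0"
  shows "M_r r t n k / of_nat k powr (of_nat r * p)
           = dirichlet_conv (\<lambda>d. t ^ d) (ramanujan_r r n) k / of_nat k powr (of_nat r * p + of_nat r)"
  using assms
  by (simp add: M_r_def dirichlet_conv_def powr_add powr_nat' sum_divide_distrib mult.commute)

theorem proposition4:
  fixes r n :: nat and p t :: complex
  assumes "r > 0" and "n > 0"
    and "Re (of_nat r * (p + 1)) > 1"
    and "norm t \<le> 1"
  shows "(\<lambda>k. M_r r t n (Suc k) / of_nat (Suc k) powr (of_nat r * p)) sums
           (polylog (of_nat r * p + of_nat r) t / zeta_fun (of_nat r * p + of_nat r)
              * sigma_r (- p) n r)"
proof -
  define s where "s = of_nat r * p + of_nat r"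
  have "1 < Re s"
    using assms(3) by (simp add: s_def distrib_left)
  then have conv: "(dirichlet_conv (\<lambda>d. t ^ d / of_nat d powr s) (\<lambda>k. ramanujan_r r n k / of_nat k powr s)
                     has_sum polylog s t * (sigma_r (- p) n r / zeta_fun s)) {1..}"
    using has_sum_polylog has_sum_ramanujan_r_dirichlet_series assms(1,2,4)
    unfolding s_def by (intro has_sum_dirichlet_conv) auto
  have eq: "dirichlet_conv (\<lambda>d. t ^ d / of_nat d powr s) (\<lambda>k. ramanujan_r r n k / of_nat k powr s) k
             = M_r r t n k / of_nat k powr (of_nat r * p)" if "k \<in> {1..}" for k
    using that by (simp add: dirichlet_conv_divide_powr M_r_divide_powr s_def)
  have "((\<lambda>k. M_r r t n k / of_nat k powr (of_nat r * p))
          has_sum polylog s t * (sigma_r (- p) n r / zeta_fun s)) {1..}"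
    by (rule has_sum_cong[THEN iffD1, OF _ conv]) (rule eq)
  then have "(\<lambda>k. M_r r t n (Suc k) / of_nat (Suc k) powr (of_nat r * p))
               sums (polylog s t * (sigma_r (- p) n r / zeta_fun s))"
    by (rule has_sum_atLeast_1_imp_sums)
  then show ?thesis
    by (simp add: s_def)
qed

end
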